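(* Let $x$ be fixed observed data and $p(x,z)$, $z\in\mathbb{R}^d$, a positive joint density differentiable in $z$. Let $\alpha\in[0,1)$, $K\ge1$, $n\in\{1,\dots,K\}$, let $q$ be a probability density on $\mathbb{R}^d$ with finite second moment and set $w(z):=p(x,z)/q(z)$. For a probability density $q_n$ on $\mathbb{R}^d$ with finite second moment define $$\mathcal{G}_n(q_n):=\frac{1}{1-\alpha}\mathbb{E}_{z_n\sim q_n}\Big[\mathbb{E}_{\{z_i\}_{i\neq n}\overset{i.i.d.}{\sim} q}\log\Big(\frac1K\frac{p(x,z_n)^{1-\alpha}}{q_n(z_n)^{1-\alpha}}+\frac1K\sum_{i\neq n}\frac{p(x,z_i)^{1-\alpha}}{q(z_i)^{1-\alpha}}\Big)\Big].$$ Suppose standard regularity conditions hold that allow interchanging derivatives with expectations/integrals. Then the Wasserstein gradient of $\mathcal{G}_n$ at $q_n=q$ is $$\nabla^W[\mathcal{G}_n(q)](z_n)=\mathbb{E}_{\{z_i\}_{i\neq n}\overset{i.i.d.}{\sim} q}\left[\left(\alpha\frac{w(z_n)^{1-\alpha}}{\sum_{i=1}^K w(z_i)^{1-\alpha}}+(1-\alpha)\left(\frac{w(z_n)^{1-\alpha}}{\sum_{i=1}^K w(z_i)^{1-\alpha}}\right)^2\right)\nabla_{z_n}\log w(z_n)\right].$$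
   Context: For a functional $\mathcal{F}$ on the space $\mathcal{P}_2(\mathbb{R}^d)$ of probability measures with finite second moment, the first variation at $\mu$ is a function $\frac{\delta\mathcal{F}(\mu)}{\delta\mu}$ such that $\lim_{\epsilon\to0^+}\frac{\mathcal{F}(\mu+\epsilon\nu)-\mathcal{F}(\mu)}{\epsilon}=\int\frac{\delta\mathcal{F}(\mu)}{\delta\mu}\,d\nu$ for all signed measures $\nu$ with $\mu+\epsilon\nu\in\mathcal{P}_2(\mathbb{R}^d)$ for small $\epsilon>0$; the Wasserstein gradient is $\nabla_x\frac{\delta\mathcal{F}(\mu)}{\delta\mu}(x)$. In the displayed formula $z_n$ is the evaluation point and the $z_i$, $i\neq n$, are integrated out. *)

theory Defs
  imports "HOL-Analysis.Analysis"
begin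

text \<open>Probability densities on a Euclidean space with finite second moment
  (the density-level version of P_2(R^d)).\<close>
definition P2_density :: "('a::euclidean_space \<Rightarrow> real) \<Rightarrow> bool" where
  "P2_density f \<longleftrightarrow> f \<in> borel_measurable lborel \<and> (\<forall>z. 0 \<le> f z) \<and>
     integrable lborel f \<and> (\<integral>z. f z \<partial>lborel) = 1 \<and>
     integrable lborel (\<lambda>z. (norm z)^2 * f z)"

text \<open>First variation: for every perturbation nu (a signed measure, given by its density)
  such that mu + eps nu is in P_2 for all small eps > 0, the right derivative of
  eps |-> F(mu + eps nu) at 0 equals the integral of Phi against nu.\<close>
definition first_variation ::
  "(('a::euclidean_space \<Rightarrow> real) \<Rightarrow> real) \<Rightarrow> ('a \<Rightarrow> real) \<Rightarrow> ('a \<Rightarrow> real) \<Rightarrow> bool" where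
  "first_variation F \<mu> \<Phi> \<longleftrightarrow>
     (\<forall>\<nu>. (\<forall>\<^sub>F \<epsilon> in at_right 0. P2_density (\<lambda>z. \<mu> z + \<epsilon> * \<nu> z)) \<longrightarrow>
        ((\<lambda>\<epsilon>. (F (\<lambda>z. \<mu> z + \<epsilon> * \<nu> z) - F \<mu>) / \<epsilon>) \<longlongrightarrow> (\<integral>z. \<Phi> z * \<nu> z \<partial>lborel)) (at_right 0))"

definition grad :: "('a::euclidean_space \<Rightarrow> real) \<Rightarrow> 'a \<Rightarrow> 'a" where
  "grad f z = (THE D. GDERIV f z :> D)"

definition wasserstein_gradient ::
  "(('a::euclidean_space \<Rightarrow> real) \<Rightarrow> real) \<Rightarrow> ('a \<Rightarrow> real) \<Rightarrow> ('a \<Rightarrow> 'a) \<Rightarrow> bool" where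
  "wasserstein_gradient F \<mu> g \<longleftrightarrow>
     (\<exists>\<Phi>. first_variation F \<mu> \<Phi> \<and> (\<forall>z. GDERIV \<Phi> z :> g z))"

definition iidQ :: "nat \<Rightarrow> nat \<Rightarrow> ('a::euclidean_space \<Rightarrow> real) \<Rightarrow> (nat \<Rightarrow> 'a) measure" where
  "iidQ K n q = PiM ({1..K} - {n}) (\<lambda>_. density lborel (\<lambda>z. ennreal (q z)))"

definition Sterm :: "('x \<Rightarrow> 'a \<Rightarrow> real) \<Rightarrow> 'x \<Rightarrow> ('a \<Rightarrow> real) \<Rightarrow> real \<Rightarrow> nat \<Rightarrow> nat \<Rightarrow> (nat \<Rightarrow> 'a) \<Rightarrow> real" where
  "Sterm p x q \<alpha> K n zs =
     (1 / real K) * (\<Sum>i\<in>{1..K} - {n}. p x (zs i) powr (1 - \<alpha>) / q (zs i) powr (1 - \<alpha>))"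

definition Gn :: "('x \<Rightarrow> 'a::euclidean_space \<Rightarrow> real) \<Rightarrow> 'x \<Rightarrow> ('a \<Rightarrow> real) \<Rightarrow> real \<Rightarrow> nat \<Rightarrow> nat
                   \<Rightarrow> ('a \<Rightarrow> real) \<Rightarrow> real" where
  "Gn p x q \<alpha> K n qn =
     1 / (1 - \<alpha>) *
       (\<integral>zn. (\<integral>zs. ln ((1 / real K) * (p x zn powr (1 - \<alpha>) / qn zn powr (1 - \<alpha>))
                          + Sterm p x q \<alpha> K n zs) \<partial>iidQ K n q)
        \<partial>density lborel (\<lambda>z. ennreal (qn z)))"

end

theory Submission
  imports Defs
begin

text \<open>Perturbing \<open>q\<^sub>n = q\<close> to \<open>q + \<epsilon>\<nu>\<close> only affects the \<open>z\<^sub>n\<close>-term, so the first variation of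
  \<open>G\<^sub>n\<close> is \<open>1/(1-\<alpha>)\<close> times the expected \<open>t\<close>-derivative at \<open>t = q(z)\<close> of
  \<open>h(t) = t ln (c (p/t)\<^sup>b + S)\<close> with \<open>b = 1-\<alpha>\<close>, \<open>c = 1/K\<close> and \<open>S\<close> the sum over the other samples.
  That derivative is \<open>ln (c w\<^sup>b + S) - b r\<close> with \<open>r = c w\<^sup>b / (c w\<^sup>b + S)\<close> the self-normalised
  weight of \<open>z\<^sub>n\<close>, a function of \<open>ln w\<close> alone; differentiating in \<open>ln w\<close> gives
  \<open>b ((1-b) r + b r\<^sup>2) = (1-\<alpha>)(\<alpha> r + (1-\<alpha>) r\<^sup>2)\<close>, and the factor \<open>1-\<alpha>\<close> cancels.\<close>

lemma DERIV_mul_ln_powr_ratio: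
  fixes P t S b c :: real
  assumes "0 < P" "0 < t" "0 \<le> S" "0 < c"
  defines "u \<equiv> c * (P / t) powr b"
  shows "((\<lambda>t. t * ln (c * (P powr b / t powr b) + S)) has_real_derivative
           ln (u + S) - b * (u / (u + S))) (at t)"
proof -
  have u: "c * (P powr b / t powr b) = u"
    unfolding u_def using assms by (simp add: powr_divide)
  have pos: "0 < u + S"
    unfolding u_def using assms by (simp add: add_pos_nonneg)
  have "((\<lambda>t. c * (P powr b / t powr b) + S) has_real_derivative
          - b * (c * (P powr b / t powr b)) / t) (at t)"
  proof -
    have "t powr (b - 1) = t powr b / t"
      using assms by (simp add: powr_diff)
    then show ?thesis
      using assms by (auto intro!: derivative_eq_intros simp: field_simps)
  qed
  then have "((\<lambda>t. c * (P powr b / t powr b) + S) has_real_derivative - b * u / t) (at t)"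
    unfolding u .
  then have "((\<lambda>t. ln (c * (P powr b / t powr b) + S)) has_real_derivative
               1 / (u + S) * (- b * u / t)) (at t)"
    using DERIV_chain2[OF DERIV_ln_divide] pos u by metis
  then have "((\<lambda>t. t * ln (c * (P powr b / t powr b) + S)) has_real_derivative
               t * (1 / (u + S) * (- b * u / t)) + 1 * ln (c * (P powr b / t powr b) + S)) (at t)"
    by (rule DERIV_mult'[OF DERIV_ident])
  then show ?thesis
    unfolding u using \<open>0 < t\<close> by simp
qed

lemma DERIV_ln_exp_sum_minus_ratio:
  fixes S b c s :: real
  assumes "0 \<le> S" "0 < c"
  defines "r \<equiv> c * exp (b * s) / (c * exp (b * s) + S)"
  shows "((\<lambda>s. ln (c * exp (b * s) + S) - b * (c * exp (b * s) / (c * exp (b * s) + S)))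
           has_real_derivative b * ((1 - b) * r + b * r\<^sup>2)) (at s)"
proof -
  have pos: "0 < c * exp (b * s) + S"
    using assms by (simp add: add_pos_nonneg)
  have "((\<lambda>s. ln (c * exp (b * s) + S)) has_real_derivative b * r) (at s)"
    unfolding r_def using pos by (auto intro!: derivative_eq_intros)
  moreover have "((\<lambda>s. c * exp (b * s) / (c * exp (b * s) + S)) has_real_derivative b * r * (1 - r)) (at s)"
    unfolding r_def using pos by (auto intro!: derivative_eq_intros simp: field_simps)
  ultimately have "((\<lambda>s. ln (c * exp (b * s) + S) - b * (c * exp (b * s) / (c * exp (b * s) + S)))
           has_real_derivative b * r - b * (b * r * (1 - r))) (at s)"
    by (intro DERIV_diff DERIV_cmult)
  then show ?thesis
    by (simp add: algebra_simps power2_eq_square)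
qed

lemma differentiable_ln_divide:
  fixes f g :: "'a::real_normed_vector \<Rightarrow> real"
  assumes "f differentiable (at z)" "g differentiable (at z)" "0 < f z" "0 < g z"
  shows "(\<lambda>y. ln (f y / g y)) differentiable (at z)"
proof (rule differentiable_compose[of ln])
  show "ln differentiable (at (f z / g z))"
    using assms DERIV_ln by (simp add: real_differentiable_def) (metis divide_pos_pos)
qed (use assms in simp)

lemma GDERIV_grad:
  fixes f :: "'a::euclidean_space \<Rightarrow> real"
  assumes "f differentiable (at z)"
  shows "GDERIV f z :> grad f z"
proof -
  obtain f' where f': "(f has_derivative f') (at z)"
    using assms differentiable_def by blast
  have "f' = (\<lambda>h. h \<bullet> adjoint f' 1)"
    using adjoint_works[OF has_derivative_linear[OF f'], of _ 1] by auto
  then have ex: "GDERIV f z :> adjoint f' 1"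
    unfolding gderiv_def using f' by simp
  have "D = adjoint f' 1" if "GDERIV f z :> D" for D
  proof -
    have "(\<lambda>h. h \<bullet> D) = (\<lambda>h. h \<bullet> adjoint f' 1)"
      using has_derivative_unique that ex unfolding gderiv_def by blast
    then show ?thesis
      by (metis vector_eq_ldot)
  qed
  then have "grad f z = adjoint f' 1"
    unfolding grad_def using ex by (rule the_equality[rotated])
  then show ?thesis
    using ex by simp
qed

lemma deriv_along_direction:
  fixes f :: "real \<Rightarrow> real"
  assumes "f differentiable (at t)"
  shows "deriv (\<lambda>\<epsilon>. f (t + \<epsilon> * v)) 0 = deriv f t * v"
proof -
  have "(f has_real_derivative deriv f t) (at (t + 0 * v))"
    using assms DERIV_deriv_iff_real_differentiable by simp
  moreover have "((\<lambda>\<epsilon>. t + \<epsilon> * v) has_real_derivative v) (at 0)"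
    by (auto intro!: derivative_eq_intros)
  ultimately show ?thesis
    by (rule DERIV_imp_deriv[OF DERIV_chain2])
qed

lemma first_variation_integral_deriv:
  fixes F :: "('a::euclidean_space \<Rightarrow> real) \<Rightarrow> real" and M :: "'b measure"
    and h :: "'a \<Rightarrow> 'b \<Rightarrow> real \<Rightarrow> real"
  assumes "\<forall>\<nu>. (\<forall>\<^sub>F \<epsilon> in at_right 0. P2_density (\<lambda>z. q z + \<epsilon> * \<nu> z)) \<longrightarrow>
      ((\<lambda>\<epsilon>. (F (\<lambda>z. q z + \<epsilon> * \<nu> z) - F q) / \<epsilon>)
         \<longlongrightarrow> C * (\<integral>z. (\<integral>zs. deriv (\<lambda>\<epsilon>. h z zs (q z + \<epsilon> * \<nu> z)) 0 \<partial>M) \<partial>lborel)) (at_right 0)"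
    and "\<And>z zs. h z zs differentiable (at (q z))"
  shows "first_variation F q (\<lambda>z. C * (\<integral>zs. deriv (h z zs) (q z) \<partial>M))"
  unfolding first_variation_def
proof (intro allI impI)
  fix \<nu> :: "'a \<Rightarrow> real"
  assume "\<forall>\<^sub>F \<epsilon> in at_right 0. P2_density (\<lambda>z. q z + \<epsilon> * \<nu> z)"
  then have "((\<lambda>\<epsilon>. (F (\<lambda>z. q z + \<epsilon> * \<nu> z) - F q) / \<epsilon>)
      \<longlongrightarrow> C * (\<integral>z. (\<integral>zs. deriv (\<lambda>\<epsilon>. h z zs (q z + \<epsilon> * \<nu> z)) 0 \<partial>M) \<partial>lborel)) (at_right 0)"
    using assms(1) by blast
  also have "C * (\<integral>z. (\<integral>zs. deriv (\<lambda>\<epsilon>. h z zs (q z + \<epsilon> * \<nu> z)) 0 \<partial>M) \<partial>lborel)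
      = (\<integral>z. C * (\<integral>zs. deriv (h z zs) (q z) \<partial>M) * \<nu> z \<partial>lborel)"
    by (simp add: deriv_along_direction[OF assms(2)] mult.assoc)
  finally show "((\<lambda>\<epsilon>. (F (\<lambda>z. q z + \<epsilon> * \<nu> z) - F q) / \<epsilon>)
      \<longlongrightarrow> (\<integral>z. C * (\<integral>zs. deriv (h z zs) (q z) \<partial>M) * \<nu> z \<partial>lborel)) (at_right 0)" .
qed

lemma GDERIV_deriv_mul_ln_powr_ratio:
  fixes P Q :: "'a::real_inner \<Rightarrow> real" and S b c :: real
  assumes "\<forall>y. 0 < P y" "\<forall>y. 0 < Q y" "0 \<le> S" "0 < c"
    and "GDERIV (\<lambda>y. ln (P y / Q y)) z :> g"
  defines "r \<equiv> c * (P z / Q z) powr b / (c * (P z / Q z) powr b + S)"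
  shows "GDERIV (\<lambda>y. deriv (\<lambda>t. t * ln (c * (P y powr b / t powr b) + S)) (Q y)) z
           :> (b * ((1 - b) * r + b * r\<^sup>2)) *\<^sub>R g"
proof -
  have powr_exp: "(P y / Q y) powr b = exp (b * ln (P y / Q y))" for y
    using assms(1,2) by (simp add: powr_def mult.commute less_imp_neq[symmetric])
  have "deriv (\<lambda>t. t * ln (c * (P y powr b / t powr b) + S)) (Q y)
      = ln (c * exp (b * ln (P y / Q y)) + S)
        - b * (c * exp (b * ln (P y / Q y)) / (c * exp (b * ln (P y / Q y)) + S))" for y
    using DERIV_imp_deriv[OF DERIV_mul_ln_powr_ratio] assms(1-4) by (simp add: powr_exp)
  moreover have "GDERIV (\<lambda>y. ln (c * exp (b * ln (P y / Q y)) + S)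
        - b * (c * exp (b * ln (P y / Q y)) / (c * exp (b * ln (P y / Q y)) + S))) z
      :> (b * ((1 - b) * r + b * r\<^sup>2)) *\<^sub>R g"
    unfolding r_def powr_exp
    by (rule GDERIV_DERIV_compose[OF assms(5) DERIV_ln_exp_sum_minus_ratio[OF assms(3,4)]])
  ultimately show ?thesis
    by simp
qed

lemma Sterm_nonneg: "0 \<le> Sterm p x q \<alpha> K n zs"
  unfolding Sterm_def by (auto intro!: sum_nonneg divide_nonneg_nonneg)

lemma self_normalized_weight_Sterm:
  fixes p :: "'x \<Rightarrow> 'a \<Rightarrow> real"
  assumes "\<forall>z. 0 < p x z" "\<forall>z. 0 < q z" "n \<in> {1..K}"
  defines "w \<equiv> \<lambda>y. p x y / q y"
  shows "1 / real K * w z powr (1 - \<alpha>) / (1 / real K * w z powr (1 - \<alpha>) + Sterm p x q \<alpha> K n zs)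
       = w z powr (1 - \<alpha>) / (\<Sum>i\<in>{1..K}. w ((zs(n := z)) i) powr (1 - \<alpha>))"
proof -
  define T where "T = (\<Sum>i\<in>{1..K} - {n}. w (zs i) powr (1 - \<alpha>))"
  have "Sterm p x q \<alpha> K n zs = 1 / real K * T"
    unfolding Sterm_def T_def w_def using assms(1,2)
    by (auto simp: powr_divide less_imp_le intro!: sum.cong arg_cong[where f = "(*) _"])
  moreover have "(\<Sum>i\<in>{1..K}. w ((zs(n := z)) i) powr (1 - \<alpha>)) = w z powr (1 - \<alpha>) + T"
    unfolding T_def using assms(3) by (simp add: sum.remove)
  moreover have "0 < real K"
    using assms(3) by simp
  ultimately show ?thesis
    by (simp add: field_simps)
qed

definition Gn_first_variation ::
    "('x \<Rightarrow> 'a::euclidean_space \<Rightarrow> real) \<Rightarrow> 'x \<Rightarrow> ('a \<Rightarrow> real) \<Rightarrow> real \<Rightarrow> nat \<Rightarrow> nat \<Rightarrow> 'a \<Rightarrow> real" where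
  "Gn_first_variation p x q \<alpha> K n z = 1 / (1 - \<alpha>) *
    (\<integral>zs. deriv (\<lambda>t. t * ln ((1 / real K) * (p x z powr (1 - \<alpha>) / t powr (1 - \<alpha>))
                         + Sterm p x q \<alpha> K n zs)) (q z) \<partial>iidQ K n q)"

lemma first_variation_Gn:
  fixes p :: "'x \<Rightarrow> 'a::euclidean_space \<Rightarrow> real"
  assumes "\<forall>z. 0 < p x z" "\<forall>z. 0 < q z" "1 \<le> K"
    and "\<forall>\<nu>. (\<forall>\<^sub>F \<epsilon> in at_right 0. P2_density (\<lambda>z. q z + \<epsilon> * \<nu> z)) \<longrightarrow>
         ((\<lambda>\<epsilon>. (Gn p x q \<alpha> K n (\<lambda>z. q z + \<epsilon> * \<nu> z) - Gn p x q \<alpha> K n q) / \<epsilon>)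
            \<longlongrightarrow> 1 / (1 - \<alpha>) *
               (\<integral>z. (\<integral>zs. deriv (\<lambda>\<epsilon>. (q z + \<epsilon> * \<nu> z) *
                     ln ((1 / real K) * (p x z powr (1 - \<alpha>) / (q z + \<epsilon> * \<nu> z) powr (1 - \<alpha>))
                         + Sterm p x q \<alpha> K n zs)) 0 \<partial>iidQ K n q) \<partial>lborel)) (at_right 0)"
  shows "first_variation (Gn p x q \<alpha> K n) q (Gn_first_variation p x q \<alpha> K n)"
  unfolding Gn_first_variation_def[abs_def]
proof (rule first_variation_integral_deriv[where h = "\<lambda>z zs t. t * ln ((1 / real K) *
    (p x z powr (1 - \<alpha>) / t powr (1 - \<alpha>)) + Sterm p x q \<alpha> K n zs)"])
  fix z zs
  have K_pos: "0 < 1 / real K"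
    using assms(3) by simp
  show "(\<lambda>t. t * ln ((1 / real K) * (p x z powr (1 - \<alpha>) / t powr (1 - \<alpha>))
      + Sterm p x q \<alpha> K n zs)) differentiable (at (q z))"
    unfolding real_differentiable_def
    using DERIV_mul_ln_powr_ratio[OF assms(1,2)[rule_format] Sterm_nonneg K_pos] ..
qed (use assms(4) in simp)

lemma GDERIV_Gn_first_variation:
  fixes p :: "'x \<Rightarrow> 'a::euclidean_space \<Rightarrow> real"
  assumes p_pos: "\<forall>z. 0 < p x z" and p_diff: "\<forall>z. (p x) differentiable (at z)"
    and q_pos: "\<forall>z. 0 < q z" and q_diff: "\<forall>z. q differentiable (at z)"
    and "\<alpha> < 1" and n: "n \<in> {1..K}"
    and interchange_grad:
      "\<forall>z g. (\<forall>zs\<in>space (iidQ K n q).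
               GDERIV (\<lambda>y. deriv (\<lambda>t. t * ln ((1 / real K) * (p x y powr (1 - \<alpha>) / t powr (1 - \<alpha>))
                                         + Sterm p x q \<alpha> K n zs)) (q y)) z :> g zs) \<longrightarrow>
             GDERIV (\<lambda>y. \<integral>zs. deriv (\<lambda>t. t * ln ((1 / real K) * (p x y powr (1 - \<alpha>) / t powr (1 - \<alpha>))
                                         + Sterm p x q \<alpha> K n zs)) (q y) \<partial>iidQ K n q) z
               :> (\<integral>zs. g zs \<partial>iidQ K n q)"
  shows "GDERIV (Gn_first_variation p x q \<alpha> K n) z :> (\<integral>zs.
              (let w = (\<lambda>y. p x y / q y);
                   r = w z powr (1 - \<alpha>) / (\<Sum>i\<in>{1..K}. w ((zs(n := z)) i) powr (1 - \<alpha>))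
               in (\<alpha> * r + (1 - \<alpha>) * r^2) *\<^sub>R grad (\<lambda>y. ln (w y)) z) \<partial>iidQ K n q)"
proof -
  define g where "g = grad (\<lambda>y. ln (p x y / q y)) z"
  define r where "r zs = 1 / real K * (p x z / q z) powr (1 - \<alpha>) /
    (1 / real K * (p x z / q z) powr (1 - \<alpha>) + Sterm p x q \<alpha> K n zs)" for zs
  have K_pos: "0 < 1 / real K"
    using n by simp
  have grad_ln_w: "GDERIV (\<lambda>y. ln (p x y / q y)) z :> g"
    unfolding g_def
    by (rule GDERIV_grad[OF differentiable_ln_divide[OF p_diff[rule_format] q_diff[rule_format]
          p_pos[rule_format] q_pos[rule_format]]])
  have grad_integrand: "GDERIV (\<lambda>y. deriv (\<lambda>t. t * ln ((1 / real K) * (p x y powr (1 - \<alpha>) / t powr (1 - \<alpha>))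
        + Sterm p x q \<alpha> K n zs)) (q y)) z
      :> ((1 - \<alpha>) * ((1 - (1 - \<alpha>)) * r zs + (1 - \<alpha>) * (r zs)\<^sup>2)) *\<^sub>R g" for zs
    unfolding r_def
    by (rule GDERIV_deriv_mul_ln_powr_ratio[where b = "1 - \<alpha>", OF p_pos q_pos Sterm_nonneg K_pos grad_ln_w])
  have "GDERIV (Gn_first_variation p x q \<alpha> K n) z :> (1 / (1 - \<alpha>)) *\<^sub>R
      (\<integral>zs. ((1 - \<alpha>) * ((1 - (1 - \<alpha>)) * r zs + (1 - \<alpha>) * (r zs)\<^sup>2)) *\<^sub>R g \<partial>iidQ K n q)"
    unfolding Gn_first_variation_def[abs_def]
    by (rule GDERIV_subst[OF GDERIV_mult[OF GDERIV_const interchange_grad[rule_format, OF grad_integrand]]])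
      simp
  moreover have "r zs = (p x z / q z) powr (1 - \<alpha>) /
      (\<Sum>i\<in>{1..K}. (p x ((zs(n := z)) i) / q ((zs(n := z)) i)) powr (1 - \<alpha>))" for zs
    unfolding r_def by (rule self_normalized_weight_Sterm[where p = p and x = x, OF p_pos q_pos n])
  ultimately show ?thesis
    using \<open>\<alpha> < 1\<close> by (simp add: g_def Let_def flip: integral_scaleR_right)
qed

theorem proposition3:
  fixes p :: "'x \<Rightarrow> 'a::euclidean_space \<Rightarrow> real" and x :: 'x
    and q :: "'a \<Rightarrow> real" and \<alpha> :: real and K n :: nat
  assumes p_pos: "\<forall>z. 0 < p x z"
    and p_diff: "\<forall>z. (p x) differentiable (at z)"
    and alpha: "0 \<le> \<alpha>" "\<alpha> < 1"
    and K: "1 \<le> K" and n: "n \<in> {1..K}"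
    and q_P2: "P2_density q"
    and q_pos: "\<forall>z. 0 < q z"
    and q_diff: "\<forall>z. q differentiable (at z)"
    \<comment> \<open>regularity: interchange of the derivative in eps with the integrals\<close>
    and interchange_eps:
      "\<forall>\<nu>. (\<forall>\<^sub>F \<epsilon> in at_right 0. P2_density (\<lambda>z. q z + \<epsilon> * \<nu> z)) \<longrightarrow>
         ((\<lambda>\<epsilon>. (Gn p x q \<alpha> K n (\<lambda>z. q z + \<epsilon> * \<nu> z) - Gn p x q \<alpha> K n q) / \<epsilon>)
            \<longlongrightarrow> 1 / (1 - \<alpha>) *
               (\<integral>z. (\<integral>zs. deriv (\<lambda>\<epsilon>. (q z + \<epsilon> * \<nu> z) *
                     ln ((1 / real K) * (p x z powr (1 - \<alpha>) / (q z + \<epsilon> * \<nu> z) powr (1 - \<alpha>))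
                         + Sterm p x q \<alpha> K n zs)) 0 \<partial>iidQ K n q) \<partial>lborel)) (at_right 0)"
    \<comment> \<open>regularity: interchange of the gradient in z_n with the expectation over z_i, i \<noteq> n\<close>
    and interchange_grad:
      "\<forall>z g. (\<forall>zs\<in>space (iidQ K n q).
               GDERIV (\<lambda>y. deriv (\<lambda>t. t * ln ((1 / real K) * (p x y powr (1 - \<alpha>) / t powr (1 - \<alpha>))
                                         + Sterm p x q \<alpha> K n zs)) (q y)) z :> g zs) \<longrightarrow>
             GDERIV (\<lambda>y. \<integral>zs. deriv (\<lambda>t. t * ln ((1 / real K) * (p x y powr (1 - \<alpha>) / t powr (1 - \<alpha>))
                                         + Sterm p x q \<alpha> K n zs)) (q y) \<partial>iidQ K n q) z
               :> (\<integral>zs. g zs \<partial>iidQ K n q)"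
  shows "wasserstein_gradient (Gn p x q \<alpha> K n) q
           (\<lambda>zn. \<integral>zs.
              (let w = (\<lambda>y. p x y / q y);
                   r = w zn powr (1 - \<alpha>) / (\<Sum>i\<in>{1..K}. w ((zs(n := zn)) i) powr (1 - \<alpha>))
               in (\<alpha> * r + (1 - \<alpha>) * r^2) *\<^sub>R grad (\<lambda>y. ln (w y)) zn) \<partial>iidQ K n q)"
  unfolding wasserstein_gradient_def
  using first_variation_Gn[OF p_pos q_pos K interchange_eps]
    GDERIV_Gn_first_variation[OF p_pos p_diff q_pos q_diff alpha(2) n interchange_grad]
  by blast

end
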